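(* Let $n\ge 2$ and let $(G(k))_{k\in\mathbb{N}}$ be a sequence of digraphs on $\mathcal{V}=\{1,\dots,n\}$ with knowledge sets evolving by the flooding update described in the context. Define $$\psi(k)=\begin{cases} n & \text{if } k\le \lceil n/2\rceil-1,\\ n-k & \text{if } k\ge \lceil n/2\rceil.\end{cases}$$ If for every $k\in\{0,1,\dots,n-2\}$ the digraph $G(k)$ contains $\psi(k)(k)$ (i.e. every node $i\in\mathcal{V}$ has, at time $k$, a closed input-cord of cardinality greater than $\psi(k)-2$), then $|\mathcal{K}_i(k+1)|\ge k+2$ for all $i\in\mathcal{V}$ and all $k\in\{0,1,\dots,n-2\}$.
   Context: Network: $\mathcal{V}=\{1,\dots,n\}$; node $i$ holds initial data $d_i\in\mathbb{R}$, pairwise distinct. At discrete times $k\in\mathbb{N}$ communication follows digraph $G(k)=(\mathcal{V},\mathcal{E}(k))$; node $i$ sends to $j$ at time $k$ iff $(i,j)\in\mathcal{E}(k)$. Knowledge sets: $\mathcal{K}_i(0)=\{d_i\}$ and $\mathcal{K}_j(k+1)=\mathcal{K}_j(k)\cup\bigcup_{i:(i,j)\in\mathcal{E}(k)}\mathcal{K}_i(k)$. An input-cord to node $i$ at time $k$ is an ordered list $(\mathcal{I}^i_1,\dots,\mathcal{I}^i_m)$ of pairwise distinct nodes of $\mathcal{V}\setminus\{i\}$ with $(\mathcal{I}^i_j,\mathcal{I}^i_{j+1})\in\mathcal{E}(k)$ for $j=1,\dots,m-1$ and $(\mathcal{I}^i_m,i)\in\mathcal{E}(k)$; its cardinality is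 $m$. It is closed if moreover $(i,\mathcal{I}^i_1)\in\mathcal{E}(k)$. For an integer $\chi$, node $i$ is contained in a $\chi(k)$-cycle if it has at time $k$ a closed input-cord of cardinality greater than $\chi-2$; $G(k)$ contains $\chi(k)$ if every node of $\mathcal{V}$ is contained in a $\chi(k)$-cycle. *)

theory Defs
  imports Complex_Main
begin

text \<open>Nodes are the naturals 1..n; E k is the edge set of G(k); d gives the initial data.\<close>

primrec know :: "(nat \<Rightarrow> (nat \<times> nat) set) \<Rightarrow> (nat \<Rightarrow> real) \<Rightarrow> nat \<Rightarrow> nat \<Rightarrow> real set" where
  "know E d j 0 = {d j}"
| "know E d j (Suc k) = know E d j k \<union> (\<Union>i\<in>{i. (i, j) \<in> E k}. know E d i k)"

definition input_cord :: "nat \<Rightarrow> (nat \<times> nat) set \<Rightarrow> nat \<Rightarrow> nat list \<Rightarrow> bool" where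
  "input_cord n Ek i xs \<longleftrightarrow>
     xs \<noteq> [] \<and> distinct xs \<and> set xs \<subseteq> {1..n} - {i} \<and>
     (\<forall>j. Suc j < length xs \<longrightarrow> (xs ! j, xs ! Suc j) \<in> Ek) \<and>
     (last xs, i) \<in> Ek"

definition closed_input_cord :: "nat \<Rightarrow> (nat \<times> nat) set \<Rightarrow> nat \<Rightarrow> nat list \<Rightarrow> bool" where
  "closed_input_cord n Ek i xs \<longleftrightarrow> input_cord n Ek i xs \<and> (i, hd xs) \<in> Ek"

definition in_chi_cycle :: "nat \<Rightarrow> (nat \<times> nat) set \<Rightarrow> int \<Rightarrow> nat \<Rightarrow> bool" where
  "in_chi_cycle n Ek \<chi> i \<longleftrightarrow> (\<exists>xs. closed_input_cord n Ek i xs \<and> int (length xs) > \<chi> - 2)"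

definition contains_chi :: "nat \<Rightarrow> (nat \<times> nat) set \<Rightarrow> int \<Rightarrow> bool" where
  "contains_chi n Ek \<chi> \<longleftrightarrow> (\<forall>i\<in>{1..n}. in_chi_cycle n Ek \<chi> i)"

definition psi :: "nat \<Rightarrow> nat \<Rightarrow> int" where
  "psi n k = (if int k \<le> \<lceil>real n / 2\<rceil> - 1 then int n else int n - int k)"

end

theory Submission
  imports Defs
begin

text \<open>Suppose some node i knew at most k + 1 values at time k + 1, and call A that set of values.
Consider the nodes whose knowledge at time t is still contained in A. This set decreases, it
contains i up to time k + 1, and by injectivity of the data it has at most k + 1 elements at
time 0. As long as it has at most k + 1 - t elements, the closed input-cord of i at time t has
more nodes than the set, so the cord leaves the set; following the cord back to i it re-enters
it along some edge, and the node at the head of that edge learns a value outside A. Hence the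
set loses an element at every step and is empty at time k + 1, contradicting that it contains i.\<close>

lemma finite_know:
  assumes "\<And>k. E k \<subseteq> V \<times> V" and "finite V"
  shows "finite (know E d j t)"
proof (induction t arbitrary: j)
  case (Suc t)
  have "finite {i. (i, j) \<in> E t}"
    using assms finite_subset[of "{i. (i, j) \<in> E t}" V] by blast
  then show ?case using Suc by simp
qed simp

lemma know_mono:
  assumes "t \<le> t'"
  shows "know E d j t \<subseteq> know E d j t'"
  using lift_Suc_mono_le[of "know E d j", OF _ assms] by auto

lemma know_subset_know_Suc_of_edge:
  assumes "(q, c) \<in> E t"
  shows "know E d q t \<subseteq> know E d c (Suc t)"
  using assms by auto

lemma card_insert_closed_input_cord:
  assumes "closed_input_cord n Ek i xs"
  shows "card (insert i (set xs)) = length xs + 1"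
proof -
  have "distinct xs" "i \<notin> set xs"
    using assms unfolding closed_input_cord_def input_cord_def by auto
  then show ?thesis by (simp add: distinct_card)
qed

lemma closed_input_cord_entering_edge:
  assumes "closed_input_cord n Ek i xs" and "P i" and "x \<in> set xs" and "\<not> P x"
  obtains q c where "q \<in> set xs" "\<not> P q" "P c" "(q, c) \<in> Ek"
proof -
  have chain: "\<And>j. Suc j < length xs \<Longrightarrow> (xs ! j, xs ! Suc j) \<in> Ek"
    and last: "(last xs, i) \<in> Ek" and ne: "xs \<noteq> []"
    using assms(1) unfolding closed_input_cord_def input_cord_def by auto
  define R where "R = {r. r < length xs \<and> \<not> P (xs ! r)}"
  have "finite R" "R \<noteq> {}"
    using assms(3,4) unfolding R_def by (auto simp: in_set_conv_nth)
  define r where "r = Max R"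
  have r: "r < length xs" "\<not> P (xs ! r)"
    using Max_in[OF \<open>finite R\<close> \<open>R \<noteq> {}\<close>] unfolding r_def R_def by auto
  have q: "xs ! r \<in> set xs" using r(1) by simp
  show thesis
  proof (cases "Suc r < length xs")
    case True
    have "Suc r \<notin> R" using Max_ge[OF \<open>finite R\<close>] r_def by fastforce
    then have "P (xs ! Suc r)" using True unfolding R_def by simp
    with that[OF q r(2)] chain[OF True] show thesis by blast
  next
    case False
    then have "r = length xs - 1" using r(1) by simp
    then have "last xs = xs ! r" using ne by (simp add: last_conv_nth)
    with that[OF q r(2) assms(2)] last show thesis by simp
  qed
qed

definition confined :: "nat \<Rightarrow> (nat \<Rightarrow> (nat \<times> nat) set) \<Rightarrow> (nat \<Rightarrow> real) \<Rightarrow> real set \<Rightarrow> nat \<Rightarrow> nat set"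
  where "confined n E d A t = {j \<in> {1..n}. know E d j t \<subseteq> A}"

lemma finite_confined: "finite (confined n E d A t)"
  unfolding confined_def by simp

lemma confined_Suc_subset: "confined n E d A (Suc t) \<subseteq> confined n E d A t"
  unfolding confined_def by auto

lemma card_confined_0:
  assumes "inj_on d {1..n}" and "finite A"
  shows "card (confined n E d A 0) \<le> card A"
proof -
  have "d ` confined n E d A 0 \<subseteq> A" unfolding confined_def by auto
  moreover have "inj_on d (confined n E d A 0)"
    using assms(1) by (rule inj_on_subset) (auto simp: confined_def)
  ultimately show ?thesis using assms(2) by (metis card_image card_mono)
qed

lemma card_confined_Suc_less:
  assumes "E t \<subseteq> {1..n} \<times> {1..n}"
    and "i \<in> confined n E d A t"
    and "closed_input_cord n (E t) i xs"
    and "card (confined n E d A t) \<le> length xs"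
  shows "card (confined n E d A (Suc t)) < card (confined n E d A t)"
proof -
  let ?S = "confined n E d A"
  have "\<not> insert i (set xs) \<subseteq> ?S t"
  proof
    assume "insert i (set xs) \<subseteq> ?S t"
    then have "card (insert i (set xs)) \<le> card (?S t)"
      by (rule card_mono[OF finite_confined])
    with assms(4) card_insert_closed_input_cord[OF assms(3)] show False by simp
  qed
  then obtain x where x: "x \<in> set xs" "x \<notin> ?S t" using assms(2) by blast
  obtain q c where qc: "q \<notin> ?S t" "c \<in> ?S t" "(q, c) \<in> E t"
    using closed_input_cord_entering_edge[where P = "\<lambda>x. x \<in> ?S t", OF assms(3,2) x] by blast
  have "q \<in> {1..n}" using qc(3) assms(1) by blast
  with qc(1) have "\<not> know E d q t \<subseteq> A" unfolding confined_def by simp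
  moreover have "know E d q t \<subseteq> know E d c (Suc t)"
    using know_subset_know_Suc_of_edge[of q c E t] qc(3) by blast
  ultimately have "c \<notin> ?S (Suc t)" unfolding confined_def by blast
  with qc(2) confined_Suc_subset have "?S (Suc t) \<subset> ?S t" by blast
  then show ?thesis by (simp add: finite_confined psubset_card_mono)
qed

theorem theorem1:
  fixes n :: nat and E :: "nat \<Rightarrow> (nat \<times> nat) set" and d :: "nat \<Rightarrow> real"
  assumes "n \<ge> 2"
    and "\<And>k. E k \<subseteq> {1..n} \<times> {1..n}"
    and "inj_on d {1..n}"
    and "\<And>k. k \<le> n - 2 \<Longrightarrow> contains_chi n (E k) (psi n k)"
  shows "\<forall>i\<in>{1..n}. \<forall>k\<le>n - 2. card (know E d i (Suc k)) \<ge> k + 2"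
proof (intro ballI allI impI, rule ccontr)
  fix i k
  assume i: "i \<in> {1..n}" and k: "k \<le> n - 2" and "\<not> k + 2 \<le> card (know E d i (Suc k))"
  define A where "A = know E d i (Suc k)"
  have "card A \<le> k + 1" using \<open>\<not> k + 2 \<le> _\<close> A_def by simp
  have "finite A" using finite_know[of E "{1..n}" d i "Suc k"] assms(2) unfolding A_def by blast
  let ?S = "confined n E d A"
  have i_confined: "i \<in> ?S t" if "t \<le> Suc k" for t
    using i know_mono[OF that] unfolding confined_def A_def by auto
  have "card (?S t) + t \<le> k + 1" if "t \<le> Suc k" for t
    using that
  proof (induction t)
    case 0
    show ?case using card_confined_0[OF assms(3) \<open>finite A\<close>, of E] \<open>card A \<le> k + 1\<close> by simp
  next
    case (Suc t)
    then have IH: "card (?S t) + t \<le> k + 1" by simp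
    have "in_chi_cycle n (E t) (psi n t) i"
      using assms(4)[of t] Suc.prems k i unfolding contains_chi_def by simp
    then obtain xs where xs: "closed_input_cord n (E t) i xs" "int (length xs) > psi n t - 2"
      unfolding in_chi_cycle_def by blast
    have "psi n t \<ge> int n - int t" unfolding psi_def by auto
    then have "card (?S t) \<le> length xs" using xs(2) IH k assms(1) by linarith
    with card_confined_Suc_less[OF assms(2) i_confined xs(1)] IH Suc.prems show ?case by simp
  qed
  from this[of "Suc k"] have "card (?S (Suc k)) = 0" by simp
  with i_confined[of "Suc k"] show False by (simp add: finite_confined)
qed

end
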